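(* Let $\mathcal H\subseteq\mathrm{Hol}(\mathbb B_d,\mathbb C^n)$ be a reproducing kernel Hilbert space in which the $\mathbb C^n$-valued polynomials are dense, and suppose $\langle\boldsymbol z^\alpha\otimes\boldsymbol\xi,\boldsymbol z^\beta\otimes\boldsymbol\eta\rangle=0$ for all $\alpha\ne\beta$ in $\mathbb Z_+^d$ and all $\boldsymbol\xi,\boldsymbol\eta\in\mathbb C^n$. If the $d$-tuple $\boldsymbol M$ of multiplication by the coordinate functions on $\mathcal H$ is $\mathcal U(d)$-homogeneous, then there is a sequence $\{A_\ell\}_{\ell\in\mathbb Z_+}$ of positive definite $n\times n$ matrices such that $$\|\boldsymbol z^\alpha\otimes\boldsymbol\xi\|^2=\alpha!\,\langle A_{|\alpha|}\boldsymbol\xi,\boldsymbol\xi\rangle,\qquad\alpha\in\mathbb Z_+^d,\ \boldsymbol\xi\in\mathbb C^n.$$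
   Context: $\mathbb B_d$ is the unit ball of $\mathbb C^d$, $\boldsymbol z^\alpha\otimes\boldsymbol\xi$ denotes the function $\boldsymbol z\mapsto\boldsymbol z^\alpha\boldsymbol\xi$, $\alpha!=\alpha_1!\cdots\alpha_d!$, $|\alpha|=\alpha_1+\cdots+\alpha_d$. The (bounded, commuting) tuple $\boldsymbol M=(M_{z_1},\ldots,M_{z_d})$ is $\mathcal U(d)$-homogeneous if for every $u=(u_{jk})\in\mathcal U(d)$ there is a unitary $\Gamma(u)$ on $\mathcal H$ with $M_{z_j}\Gamma(u)=\Gamma(u)\sum_{k}u_{jk}M_{z_k}$ for $j=1,\ldots,d$. *)

theory Defs
  imports "HOL-Analysis.Analysis"
begin

type_synonym ('d, 'n) vfun = "complex ^ 'd \<Rightarrow> complex ^ 'n"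

definition ballB :: "(complex ^ 'd) set" where
  "ballB = ball 0 1"

definition hol_ball :: "('d::finite, 'n::finite) vfun \<Rightarrow> bool" where
  "hol_ball f \<longleftrightarrow> (\<forall>z\<in>ballB. \<exists>L. (f has_derivative L) (at z) \<and>
      (\<forall>c x. L (c *s x) = c *s L x))"

text \<open>Elements of Hol(B_d,C^n) are represented extensionally: zero off the ball.\<close>
definition restrB :: "('d::finite, 'n::finite) vfun \<Rightarrow> ('d, 'n) vfun" where
  "restrB f = (\<lambda>z. if z \<in> ballB then f z else 0)"

definition vadd :: "('d::finite, 'n::finite) vfun \<Rightarrow> ('d, 'n) vfun \<Rightarrow> ('d, 'n) vfun" where
  "vadd f g = (\<lambda>z. f z + g z)"

definition vsub :: "('d::finite, 'n::finite) vfun \<Rightarrow> ('d, 'n) vfun \<Rightarrow> ('d, 'n) vfun" where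
  "vsub f g = (\<lambda>z. f z - g z)"

definition vscale :: "complex \<Rightarrow> ('d::finite, 'n::finite) vfun \<Rightarrow> ('d, 'n) vfun" where
  "vscale c f = (\<lambda>z. c *s f z)"

definition monomial_vec :: "('d::finite \<Rightarrow> nat) \<Rightarrow> complex ^ 'n::finite \<Rightarrow> ('d, 'n) vfun" where
  "monomial_vec \<alpha> \<xi> = restrB (\<lambda>z. (\<Prod>i\<in>UNIV. (z $ i) ^ (\<alpha> i)) *s \<xi>)"

definition mi_fact :: "('d::finite \<Rightarrow> nat) \<Rightarrow> nat" where
  "mi_fact \<alpha> = (\<Prod>i\<in>UNIV. fact (\<alpha> i))"

definition mi_abs :: "('d::finite \<Rightarrow> nat) \<Rightarrow> nat" where
  "mi_abs \<alpha> = (\<Sum>i\<in>UNIV. \<alpha> i)"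

definition Mz :: "'d::finite \<Rightarrow> ('d, 'n::finite) vfun \<Rightarrow> ('d, 'n) vfun" where
  "Mz j f = (\<lambda>z. (z $ j) *s f z)"

definition hnorm :: "(('d, 'n) vfun \<Rightarrow> ('d, 'n) vfun \<Rightarrow> complex) \<Rightarrow> ('d::finite, 'n::finite) vfun \<Rightarrow> real" where
  "hnorm ip f = sqrt (Re (ip f f))"

definition hilbert_hol :: "('d::finite, 'n::finite) vfun set \<Rightarrow> (('d, 'n) vfun \<Rightarrow> ('d, 'n) vfun \<Rightarrow> complex) \<Rightarrow> bool" where
  "hilbert_hol H ip \<longleftrightarrow>
     (\<forall>f\<in>H. hol_ball f \<and> (\<forall>z. z \<notin> ballB \<longrightarrow> f z = 0)) \<and>
     (\<lambda>z. 0) \<in> H \<and>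
     (\<forall>f\<in>H. \<forall>g\<in>H. vadd f g \<in> H) \<and>
     (\<forall>c. \<forall>f\<in>H. vscale c f \<in> H) \<and>
     (\<forall>f\<in>H. \<forall>g\<in>H. \<forall>h\<in>H. ip (vadd f g) h = ip f h + ip g h) \<and>
     (\<forall>c. \<forall>f\<in>H. \<forall>g\<in>H. ip (vscale c f) g = c * ip f g) \<and>
     (\<forall>f\<in>H. \<forall>g\<in>H. ip g f = cnj (ip f g)) \<and>
     (\<forall>f\<in>H. Im (ip f f) = 0 \<and> Re (ip f f) \<ge> 0) \<and>
     (\<forall>f\<in>H. ip f f = 0 \<longrightarrow> f = (\<lambda>z. 0)) \<and>
     (\<forall>X. (\<forall>k. X k \<in> H) \<and>
          (\<forall>e>0. \<exists>N. \<forall>m\<ge>N. \<forall>k\<ge>N. hnorm ip (vsub (X m) (X k)) < e) \<longrightarrow>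
          (\<exists>f\<in>H. (\<lambda>k. hnorm ip (vsub (X k) f)) \<longlonglongrightarrow> 0))"

definition rkhs_hol :: "('d::finite, 'n::finite) vfun set \<Rightarrow> (('d, 'n) vfun \<Rightarrow> ('d, 'n) vfun \<Rightarrow> complex) \<Rightarrow> bool" where
  "rkhs_hol H ip \<longleftrightarrow> hilbert_hol H ip \<and>
     (\<forall>z\<in>ballB. \<exists>C. \<forall>f\<in>H. norm (f z) \<le> C * hnorm ip f)"

definition polys_dense :: "('d::finite, 'n::finite) vfun set \<Rightarrow> (('d, 'n) vfun \<Rightarrow> ('d, 'n) vfun \<Rightarrow> complex) \<Rightarrow> bool" where
  "polys_dense H ip \<longleftrightarrow>
     (\<forall>\<alpha> \<xi>. monomial_vec \<alpha> \<xi> \<in> H) \<and>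
     (\<forall>f\<in>H. \<forall>e>0. \<exists>A c. finite A \<and>
        hnorm ip (vsub f (\<lambda>z. \<Sum>\<alpha>\<in>A. monomial_vec \<alpha> (c \<alpha>) z)) < e)"

definition mult_bounded :: "('d::finite, 'n::finite) vfun set \<Rightarrow> (('d, 'n) vfun \<Rightarrow> ('d, 'n) vfun \<Rightarrow> complex) \<Rightarrow> bool" where
  "mult_bounded H ip \<longleftrightarrow>
     (\<forall>j. (\<forall>f\<in>H. Mz j f \<in> H) \<and> (\<exists>C. \<forall>f\<in>H. hnorm ip (Mz j f) \<le> C * hnorm ip f))"

definition unitary_mat :: "complex ^ 'd ^ 'd \<Rightarrow> bool" where
  "unitary_mat u \<longleftrightarrow>
     (\<forall>i k. (\<Sum>j\<in>UNIV. u $ i $ j * cnj (u $ k $ j)) = (if i = k then 1 else 0))"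

definition unitary_op :: "('d::finite, 'n::finite) vfun set \<Rightarrow> (('d, 'n) vfun \<Rightarrow> ('d, 'n) vfun \<Rightarrow> complex) \<Rightarrow> (('d, 'n) vfun \<Rightarrow> ('d, 'n) vfun) \<Rightarrow> bool" where
  "unitary_op H ip G \<longleftrightarrow> bij_betw G H H \<and>
     (\<forall>f\<in>H. \<forall>g\<in>H. G (vadd f g) = vadd (G f) (G g)) \<and>
     (\<forall>c. \<forall>f\<in>H. G (vscale c f) = vscale c (G f)) \<and>
     (\<forall>f\<in>H. \<forall>g\<in>H. ip (G f) (G g) = ip f g)"

definition Ud_homogeneous :: "('d::finite, 'n::finite) vfun set \<Rightarrow> (('d, 'n) vfun \<Rightarrow> ('d, 'n) vfun \<Rightarrow> complex) \<Rightarrow> bool" where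
  "Ud_homogeneous H ip \<longleftrightarrow>
     (\<forall>u. unitary_mat u \<longrightarrow> (\<exists>G. unitary_op H ip G \<and>
        (\<forall>j. \<forall>f\<in>H. Mz j (G f) = G (\<lambda>z. \<Sum>k\<in>UNIV. u $ j $ k *s Mz k f z))))"

definition cinner :: "complex ^ 'n::finite \<Rightarrow> complex ^ 'n \<Rightarrow> complex" where
  "cinner x y = (\<Sum>i\<in>UNIV. x $ i * cnj (y $ i))"

definition posdef_mat :: "complex ^ 'n ^ 'n::finite \<Rightarrow> bool" where
  "posdef_mat A \<longleftrightarrow> (\<forall>i j. A $ i $ j = cnj (A $ j $ i)) \<and>
     (\<forall>\<xi>. \<xi> \<noteq> 0 \<longrightarrow> Im (cinner (A *v \<xi>) \<xi>) = 0 \<and> Re (cinner (A *v \<xi>) \<xi>) > 0)"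

end

theory Submission
  imports Defs
begin

(* A unitary Gamma(u) intertwining M with u M maps the constants, which form the orthogonal
   complement of the ranges of the M_z_j (here density of the polynomials and boundedness of
   evaluation at 0 are used), to constants, and hence maps (u z)^alpha xi to a monomial
   z^alpha eta.  So the polynomials (u z)^alpha xi are mutually orthogonal, like the monomials.
   For a rotation u in a coordinate plane (i, j) with tan^2 of the angle equal to y > 0, the
   orthogonality of (u z)^(gamma + (M+1) e_i) xi and (u z)^(gamma + M e_i + e_j) xi is a
   polynomial identity in y; its coefficients give
     binom(M+1, m) |z^(gamma + m e_i + (M+1-m) e_j) xi|^2
       = binom(M+1, m+1) |z^(gamma + (m+1) e_i + (M-m) e_j) xi|^2,
   i.e. |z^alpha xi|^2 / alpha! is unchanged when a unit of alpha moves from one coordinate to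
   another.  It therefore depends only on |alpha|, and A_l is the Gram matrix of the
   sesquilinear form (xi, eta) |-> <z_1^l xi, z_1^l eta> divided by l!. *)

section \<open>Inner products on \<open>H\<close>\<close>

locale hol_hilbert =
  fixes H :: "(complex ^ 'd::finite \<Rightarrow> complex ^ 'n::finite) set"
    and ip :: "(complex ^ 'd \<Rightarrow> complex ^ 'n) \<Rightarrow> (complex ^ 'd \<Rightarrow> complex ^ 'n) \<Rightarrow> complex"
  assumes hilbert: "hilbert_hol H ip"
begin

lemma zero_mem: "(\<lambda>z. 0) \<in> H"
  and vadd_mem: "f \<in> H \<Longrightarrow> g \<in> H \<Longrightarrow> vadd f g \<in> H"
  and vscale_mem: "f \<in> H \<Longrightarrow> vscale c f \<in> H"
  and ip_vadd_left: "f \<in> H \<Longrightarrow> g \<in> H \<Longrightarrow> h \<in> H \<Longrightarrow> ip (vadd f g) h = ip f h + ip g h"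
  and ip_vscale_left: "f \<in> H \<Longrightarrow> g \<in> H \<Longrightarrow> ip (vscale c f) g = c * ip f g"
  and ip_commute: "f \<in> H \<Longrightarrow> g \<in> H \<Longrightarrow> ip g f = cnj (ip f g)"
  and ip_self_Im: "f \<in> H \<Longrightarrow> Im (ip f f) = 0"
  and ip_self_Re_nonneg: "f \<in> H \<Longrightarrow> Re (ip f f) \<ge> 0"
  and ip_self_eq_0: "f \<in> H \<Longrightarrow> ip f f = 0 \<Longrightarrow> f = (\<lambda>z. 0)"
  using hilbert unfolding hilbert_hol_def by blast+

lemma vsub_eq_vadd_vscale: "vsub f g = vadd f (vscale (-1) g)"
  unfolding vsub_def vadd_def vscale_def by (simp add: fun_eq_iff vec_eq_iff)

lemma vsub_eq_0_iff: "vsub f g = (\<lambda>z. 0) \<longleftrightarrow> f = g"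
  unfolding vsub_def by (simp add: fun_eq_iff)

lemma vsub_mem: "f \<in> H \<Longrightarrow> g \<in> H \<Longrightarrow> vsub f g \<in> H"
  by (simp add: vsub_eq_vadd_vscale vadd_mem vscale_mem)

lemma sum_mem: "finite A \<Longrightarrow> (\<And>a. a \<in> A \<Longrightarrow> f a \<in> H) \<Longrightarrow> (\<lambda>z. \<Sum>a\<in>A. f a z) \<in> H"
proof (induction A rule: finite_induct)
  case empty
  then show ?case using zero_mem by simp
next
  case (insert x F)
  then have "(\<lambda>z. \<Sum>a\<in>insert x F. f a z) = vadd (f x) (\<lambda>z. \<Sum>a\<in>F. f a z)"
    by (simp add: vadd_def)
  with insert show ?case by (simp add: vadd_mem)
qed

lemma ip_vadd_right: "f \<in> H \<Longrightarrow> g \<in> H \<Longrightarrow> h \<in> H \<Longrightarrow> ip f (vadd g h) = ip f g + ip f h"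
  by (metis complex_cnj_add ip_commute ip_vadd_left vadd_mem)

lemma ip_vscale_right: "f \<in> H \<Longrightarrow> g \<in> H \<Longrightarrow> ip f (vscale c g) = cnj c * ip f g"
  by (metis complex_cnj_mult ip_commute ip_vscale_left vscale_mem)

lemma ip_vsub_left: "f \<in> H \<Longrightarrow> g \<in> H \<Longrightarrow> h \<in> H \<Longrightarrow> ip (vsub f g) h = ip f h - ip g h"
  by (simp add: vsub_eq_vadd_vscale ip_vadd_left vscale_mem ip_vscale_left)

lemma ip_vsub_right: "f \<in> H \<Longrightarrow> g \<in> H \<Longrightarrow> h \<in> H \<Longrightarrow> ip f (vsub g h) = ip f g - ip f h"
  by (simp add: vsub_eq_vadd_vscale ip_vadd_right vscale_mem ip_vscale_right)

lemma ip_zero_left: "g \<in> H \<Longrightarrow> ip (\<lambda>z. 0) g = 0"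
  using ip_vscale_left[of g g 0] by (simp add: vscale_def)

lemma ip_sum_left:
  "finite A \<Longrightarrow> (\<And>a. a \<in> A \<Longrightarrow> f a \<in> H) \<Longrightarrow> g \<in> H \<Longrightarrow>
   ip (\<lambda>z. \<Sum>a\<in>A. f a z) g = (\<Sum>a\<in>A. ip (f a) g)"
proof (induction A rule: finite_induct)
  case empty
  then show ?case using ip_zero_left by simp
next
  case (insert x F)
  then have "(\<lambda>z. \<Sum>a\<in>insert x F. f a z) = vadd (f x) (\<lambda>z. \<Sum>a\<in>F. f a z)"
    by (simp add: vadd_def)
  with insert show ?case by (simp add: ip_vadd_left sum_mem)
qed

lemma ip_sum_right:
  "finite A \<Longrightarrow> (\<And>a. a \<in> A \<Longrightarrow> f a \<in> H) \<Longrightarrow> g \<in> H \<Longrightarrow>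
   ip g (\<lambda>z. \<Sum>a\<in>A. f a z) = (\<Sum>a\<in>A. ip g (f a))"
proof -
  assume A: "finite A" "\<And>a. a \<in> A \<Longrightarrow> f a \<in> H" and g: "g \<in> H"
  have "ip g (\<lambda>z. \<Sum>a\<in>A. f a z) = cnj (\<Sum>a\<in>A. ip (f a) g)"
    using ip_commute[OF sum_mem[OF A] g] ip_sum_left[OF A g] by simp
  also have "\<dots> = (\<Sum>a\<in>A. ip g (f a))"
    unfolding cnj_sum using A g by (intro sum.cong refl) (metis ip_commute)
  finally show ?thesis .
qed

lemma hnorm_nonneg: "f \<in> H \<Longrightarrow> hnorm ip f \<ge> 0"
  unfolding hnorm_def using ip_self_Re_nonneg by simp

lemma Cauchy_Schwarz:
  assumes f: "f \<in> H" and g: "g \<in> H"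
  shows "norm (ip f g) \<le> hnorm ip f * hnorm ip g"
proof (cases "ip g g = 0")
  case True
  then have "ip f g = 0"
    using ip_self_eq_0[OF g] ip_commute[OF zero_mem f] ip_zero_left[OF f] by simp
  then show ?thesis using hnorm_nonneg f g by simp
next
  case False
  define a where "a = Re (ip g g)"
  have ga: "ip g g = of_real a"
    using ip_self_Im[OF g] by (simp add: a_def complex_eq_iff)
  have apos: "a > 0"
    using False ga ip_self_Re_nonneg[OF g] a_def by (metis less_eq_real_def of_real_0)
  define p where "p = ip f g"
  \<comment> \<open>expand \<open>0 \<le> \<langle>f + t g, f + t g\<rangle>\<close> at the minimising \<open>t = - p / a\<close>\<close>
  define t where "t = - p / of_real a"
  have tg: "vscale t g \<in> H" using g vscale_mem by blast
  have "ip (vadd f (vscale t g)) (vadd f (vscale t g))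
        = ip f f + cnj t * p + t * cnj p + t * cnj t * of_real a"
    using f g tg by (simp add: ip_vadd_left ip_vadd_right vadd_mem ip_vscale_left ip_vscale_right
        p_def ga ip_commute[OF f g] algebra_simps)
  also have "\<dots> = ip f f - of_real ((cmod p)\<^sup>2 / a)"
    using apos by (simp add: t_def field_simps complex_norm_square[symmetric])
  finally have "Re (ip f f) - (cmod p)\<^sup>2 / a \<ge> 0"
    using ip_self_Re_nonneg[OF vadd_mem[OF f tg]] by simp
  then have "(cmod p)\<^sup>2 \<le> Re (ip f f) * a" using apos by (simp add: field_simps)
  then have "sqrt ((cmod p)\<^sup>2) \<le> sqrt (Re (ip f f) * a)" by (rule real_sqrt_le_mono)
  then show ?thesis unfolding hnorm_def p_def a_def by (simp add: real_sqrt_mult)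
qed

end

section \<open>Monomials and multi-indices\<close>

lemma prod_power_fun_upd_Suc:
  fixes w :: "'d::finite \<Rightarrow> 'a::comm_monoid_mult"
  shows "(\<Prod>i\<in>UNIV. w i ^ (\<alpha>(j := Suc (\<alpha> j))) i) = w j * (\<Prod>i\<in>UNIV. w i ^ \<alpha> i)"
proof -
  have "(\<Prod>i\<in>UNIV - {j}. w i ^ (\<alpha>(j := Suc (\<alpha> j))) i) = (\<Prod>i\<in>UNIV - {j}. w i ^ \<alpha> i)"
    by (intro prod.cong) auto
  then show ?thesis
    by (simp add: prod.remove[of UNIV j] del: fun_upd_apply) (simp add: mult.assoc)
qed

lemma sum_fun_upd_Suc: "sum (\<alpha>(j := Suc (\<alpha> j))) (UNIV :: 'd::finite set) = Suc (sum \<alpha> UNIV)"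
proof -
  have "sum (\<alpha>(j := Suc (\<alpha> j))) (UNIV - {j}) = sum \<alpha> (UNIV - {j})"
    by (intro sum.cong) auto
  then show ?thesis by (simp add: sum.remove[of UNIV j])
qed

lemma fun_upd_Suc_neq_0: "\<alpha>(j := Suc (\<alpha> j)) \<noteq> (\<lambda>_. 0 :: nat)"
  by (metis fun_upd_same nat.distinct(1))

lemma obtain_fun_upd_Suc:
  assumes "\<alpha> \<noteq> (\<lambda>_. 0 :: nat)"
  obtains j \<beta> where "\<alpha> = \<beta>(j := Suc (\<beta> j))"
proof -
  obtain j where "\<alpha> j \<noteq> 0" using assms by auto
  then have "\<alpha> = (\<alpha>(j := \<alpha> j - 1))(j := Suc ((\<alpha>(j := \<alpha> j - 1)) j))"
    by (auto simp: fun_eq_iff)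
  then show thesis by (rule that)
qed

lemma multi_index_induct [case_names zero Suc]:
  fixes \<alpha> :: "'d::finite \<Rightarrow> nat"
  assumes zero: "P (\<lambda>_. 0)"
    and Suc: "\<And>\<beta> j. P \<beta> \<Longrightarrow> P (\<beta>(j := Suc (\<beta> j)))"
  shows "P \<alpha>"
proof (induction "sum \<alpha> UNIV" arbitrary: \<alpha>)
  case 0
  then have "\<alpha> = (\<lambda>_. 0)" by (simp add: fun_eq_iff)
  with zero show ?case by simp
next
  case (Suc n)
  then have "\<alpha> \<noteq> (\<lambda>_. 0)" by auto
  then obtain j \<beta> where \<alpha>: "\<alpha> = \<beta>(j := Suc (\<beta> j))" by (rule obtain_fun_upd_Suc)
  have "Suc n = Suc (sum \<beta> UNIV)" using Suc.hyps(2) unfolding \<alpha> sum_fun_upd_Suc .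
  then have "n = sum \<beta> UNIV" by simp
  then show ?case unfolding \<alpha> by (intro assms(2) Suc.hyps(1))
qed

lemma mi_fact_fun_upd_Suc: "mi_fact (\<beta>(j := Suc (\<beta> j))) = Suc (\<beta> j) * mi_fact \<beta>"
proof -
  have "(\<Prod>i\<in>UNIV - {j}. fact ((\<beta>(j := Suc (\<beta> j))) i)) = (\<Prod>i\<in>UNIV - {j}. fact (\<beta> i) :: nat)"
    by (intro prod.cong) auto
  then show ?thesis
    unfolding mi_fact_def by (simp add: prod.remove[of UNIV j] del: fun_upd_apply) (simp add: algebra_simps)
qed

lemma mi_fact_pos: "mi_fact \<beta> > 0"
  unfolding mi_fact_def by (simp add: prod_pos)

lemma mi_abs_fun_upd_Suc: "mi_abs (\<beta>(j := Suc (\<beta> j))) = Suc (mi_abs \<beta>)"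
  unfolding mi_abs_def by (rule sum_fun_upd_Suc)

lemma Mz_monomial_vec: "Mz j (monomial_vec \<alpha> x) = monomial_vec (\<alpha>(j := Suc (\<alpha> j))) x"
  unfolding Mz_def monomial_vec_def restrB_def
  by (simp add: fun_eq_iff vec_eq_iff prod_power_fun_upd_Suc del: fun_upd_apply)

lemma Mz_vsub: "Mz j (vsub f g) = vsub (Mz j f) (Mz j g)"
  unfolding Mz_def vsub_def by (simp add: fun_eq_iff vec_eq_iff algebra_simps)

lemma monomial_vec_at_0:
  "monomial_vec \<alpha> x (0 :: complex ^ 'd::finite) = (if \<alpha> = (\<lambda>_. 0) then x else 0)"
proof -
  have "(\<Prod>i\<in>UNIV. (0 :: complex) ^ \<alpha> i) = 0" if "\<alpha> \<noteq> (\<lambda>_. 0)"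
    using that by (auto intro: prod_zero)
  then show ?thesis by (simp add: monomial_vec_def restrB_def ballB_def)
qed

lemma monomial_vec_add: "monomial_vec \<alpha> (x + y) = vadd (monomial_vec \<alpha> x) (monomial_vec \<alpha> y)"
  unfolding monomial_vec_def restrB_def vadd_def by (simp add: fun_eq_iff vec_eq_iff algebra_simps)

lemma monomial_vec_scale: "monomial_vec \<alpha> (c *s x) = vscale c (monomial_vec \<alpha> x)"
  unfolding monomial_vec_def restrB_def vscale_def by (simp add: fun_eq_iff vec_eq_iff)

lemma monomial_vec_axis_expansion:
  "monomial_vec \<alpha> x = (\<lambda>z. \<Sum>i\<in>UNIV. vscale (x $ i) (monomial_vec \<alpha> (axis i 1)) z)"
proof -
  have "monomial_vec \<alpha> x = monomial_vec \<alpha> (\<Sum>i\<in>UNIV. x $ i *s axis i 1)"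
    by (simp add: basis_expansion)
  also have "\<dots> = (\<lambda>z. \<Sum>i\<in>UNIV. vscale (x $ i) (monomial_vec \<alpha> (axis i 1)) z)"
    unfolding monomial_vec_def restrB_def vscale_def
    by (rule ext) (simp add: sum_cmul vec_eq_iff sum_component algebra_simps sum_distrib_left)
  finally show ?thesis .
qed

lemma monomial_vec_zero: "monomial_vec \<alpha> 0 = (\<lambda>z. 0)"
  unfolding monomial_vec_def restrB_def by (simp add: fun_eq_iff)

lemma monomial_vec_nonzero:
  fixes \<alpha> :: "'d::finite \<Rightarrow> nat" and \<xi> :: "complex ^ 'n::finite"
  assumes "\<xi> \<noteq> 0"
  shows "monomial_vec \<alpha> \<xi> \<noteq> (\<lambda>z. 0)"
proof
  assume vanish: "monomial_vec \<alpha> \<xi> = (\<lambda>z. 0)"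
  let ?z = "(\<chi> i. 1 / (2 * of_nat CARD('d))) :: complex ^ 'd"
  have "norm ?z \<le> (\<Sum>i\<in>UNIV. norm (?z $ i))"
    unfolding norm_vec_def by (rule L2_set_le_sum) simp
  also have "\<dots> = 1 / 2" by (simp add: norm_divide)
  finally have "?z \<in> ballB" by (simp add: ballB_def)
  moreover have "monomial_vec \<alpha> \<xi> ?z = 0" using vanish by simp
  ultimately have "(\<Prod>i\<in>UNIV. (?z $ i) ^ \<alpha> i) *s \<xi> = 0"
    unfolding monomial_vec_def restrB_def by simp
  then show False using assms by (simp add: vec_eq_iff)
qed

definition poly_vec :: "(('d::finite) \<Rightarrow> nat) set \<Rightarrow> (('d \<Rightarrow> nat) \<Rightarrow> complex ^ 'n::finite) \<Rightarrow> ('d, 'n) vfun"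
  where "poly_vec A c = (\<lambda>z. \<Sum>\<alpha>\<in>A. monomial_vec \<alpha> (c \<alpha>) z)"

lemma Mz_poly_vec:
  "Mz j (poly_vec A c) = (\<lambda>z. \<Sum>\<alpha>\<in>A. monomial_vec (\<alpha>(j := Suc (\<alpha> j))) (c \<alpha>) z)"
  by (simp add: poly_vec_def fun_eq_iff Mz_def sum_cmul[symmetric] Mz_monomial_vec[symmetric]
      del: fun_upd_apply)

section \<open>Density of the polynomials\<close>

locale monomial_rkhs = hol_hilbert H ip
  for H :: "(complex ^ 'd::finite \<Rightarrow> complex ^ 'n::finite) set" and ip +
  assumes rkhs: "rkhs_hol H ip"
    and polys_dense: "polys_dense H ip"
    and monomials_orthogonal:
      "\<And>\<alpha> \<beta> \<xi> \<eta>. \<alpha> \<noteq> \<beta> \<Longrightarrow> ip (monomial_vec \<alpha> \<xi>) (monomial_vec \<beta> \<eta>) = 0"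
    and mult_bounded: "mult_bounded H ip"
begin

lemma monomial_vec_mem: "monomial_vec \<alpha> x \<in> H"
  using polys_dense unfolding polys_dense_def by blast

lemma poly_vec_mem: "finite A \<Longrightarrow> poly_vec A c \<in> H"
  unfolding poly_vec_def by (rule sum_mem) (auto intro: monomial_vec_mem)

lemma poly_vec_approx: "f \<in> H \<Longrightarrow> e > 0 \<Longrightarrow> \<exists>A c. finite A \<and> hnorm ip (vsub f (poly_vec A c)) < e"
  using polys_dense unfolding polys_dense_def poly_vec_def by blast

lemma Mz_mem: "f \<in> H \<Longrightarrow> Mz j f \<in> H"
  using mult_bounded unfolding mult_bounded_def by blast

lemma Mz_bounded: "\<exists>C. \<forall>f\<in>H. hnorm ip (Mz j f) \<le> C * hnorm ip f"
  using mult_bounded unfolding mult_bounded_def by blast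

lemma eval_0_bounded: "\<exists>C. \<forall>f\<in>H. norm (f 0) \<le> C * hnorm ip f"
  using rkhs unfolding rkhs_hol_def ballB_def by simp

lemma bounded_functional_eq_0:
  assumes diff: "\<And>f g. f \<in> H \<Longrightarrow> g \<in> H \<Longrightarrow> \<phi> (vsub f g) = \<phi> f - \<phi> g"
    and bounded: "\<And>f. f \<in> H \<Longrightarrow> norm (\<phi> f) \<le> K * hnorm ip f"
    and polys: "\<And>A c. finite A \<Longrightarrow> \<phi> (poly_vec A c) = 0"
    and f: "f \<in> H"
  shows "\<phi> f = 0"
proof -
  have "norm (\<phi> f) \<le> e" if e: "e > 0" for e
  proof -
    obtain A c where A: "finite A" "hnorm ip (vsub f (poly_vec A c)) < e / (\<bar>K\<bar> + 1)"
      using poly_vec_approx[OF f, of "e / (\<bar>K\<bar> + 1)"] e by auto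
    let ?r = "vsub f (poly_vec A c)"
    have r: "?r \<in> H" using f A(1) by (simp add: vsub_mem poly_vec_mem)
    have "\<phi> f = \<phi> ?r" using diff[OF f poly_vec_mem[OF A(1)]] polys[OF A(1)] by simp
    then have "norm (\<phi> f) \<le> \<bar>K\<bar> * hnorm ip ?r"
      using bounded[OF r] hnorm_nonneg[OF r] by (smt (verit) mult_right_mono abs_ge_self)
    also have "\<dots> \<le> (\<bar>K\<bar> + 1) * (e / (\<bar>K\<bar> + 1))"
      using A(2) hnorm_nonneg[OF r] by (intro mult_mono) auto
    finally show ?thesis by simp
  qed
  then show ?thesis by (metis field_le_epsilon norm_le_zero_iff add_0)
qed

lemma ip_Mz_constant:
  assumes h: "h \<in> H"
  shows "ip (Mz j h) (monomial_vec (\<lambda>_. 0) \<xi>) = 0"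
proof -
  let ?c = "monomial_vec (\<lambda>_. 0) \<xi>"
  obtain C where C: "\<forall>f\<in>H. hnorm ip (Mz j f) \<le> C * hnorm ip f" using Mz_bounded by blast
  show ?thesis
  proof (rule bounded_functional_eq_0[where \<phi> = "\<lambda>f. ip (Mz j f) ?c" and K = "C * hnorm ip ?c"])
    fix f assume f: "f \<in> H"
    have "norm (ip (Mz j f) ?c) \<le> hnorm ip (Mz j f) * hnorm ip ?c"
      using f by (simp add: Cauchy_Schwarz Mz_mem monomial_vec_mem)
    also have "\<dots> \<le> C * hnorm ip f * hnorm ip ?c"
      using C f by (simp add: mult_right_mono hnorm_nonneg monomial_vec_mem)
    finally show "norm (ip (Mz j f) ?c) \<le> C * hnorm ip ?c * hnorm ip f"
      by (simp add: algebra_simps)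
  next
    fix A :: "('d \<Rightarrow> nat) set" and c assume "finite A"
    then show "ip (Mz j (poly_vec A c)) ?c = 0"
      by (simp add: Mz_poly_vec ip_sum_left monomial_vec_mem monomials_orthogonal fun_upd_Suc_neq_0)
  qed (simp_all add: h Mz_vsub ip_vsub_left Mz_mem monomial_vec_mem)
qed

lemma bounded_linear_ip_constant:
  assumes c: "c \<in> H"
  shows "bounded_linear (\<lambda>x. ip (monomial_vec (\<lambda>_. 0) x) c)"
proof -
  have scaleR: "r *\<^sub>R x = of_real r *s x" for r and x :: "complex ^ 'n"
    by (simp add: vec_eq_iff) (simp add: scaleR_conv_of_real)
  have "linear (\<lambda>x. ip (monomial_vec (\<lambda>_. 0) x) c)"
  proof (rule linearI)
    fix r x
    show "ip (monomial_vec (\<lambda>_. 0) (r *\<^sub>R x)) c = r *\<^sub>R ip (monomial_vec (\<lambda>_. 0) x) c"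
      unfolding scaleR monomial_vec_scale using c
      by (simp add: ip_vscale_left monomial_vec_mem scaleR_conv_of_real)
  qed (simp add: c monomial_vec_add ip_vadd_left monomial_vec_mem)
  then show ?thesis by (simp add: linear_conv_bounded_linear)
qed

lemma ip_monomial_vec_constant:
  "ip (monomial_vec \<alpha> x) (monomial_vec (\<lambda>_. 0) \<eta>)
   = ip (monomial_vec (\<lambda>_. 0) (monomial_vec \<alpha> x 0)) (monomial_vec (\<lambda>_. 0) \<eta>)"
  by (simp add: monomial_vec_at_0 monomials_orthogonal monomial_vec_zero ip_zero_left monomial_vec_mem)

lemma ip_constant_right:
  assumes f: "f \<in> H"
  shows "ip f (monomial_vec (\<lambda>_. 0) \<eta>) = ip (monomial_vec (\<lambda>_. 0) (f 0)) (monomial_vec (\<lambda>_. 0) \<eta>)"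
proof -
  let ?c = "monomial_vec (\<lambda>_. 0) \<eta>"
  let ?L = "\<lambda>x. ip (monomial_vec (\<lambda>_. 0) x) ?c"
  have L: "bounded_linear ?L" by (rule bounded_linear_ip_constant[OF monomial_vec_mem])
  obtain K where K: "K \<ge> 0" "\<And>x. norm (?L x) \<le> norm x * K"
    using bounded_linear.nonneg_bounded[OF L] by blast
  obtain C where C: "\<forall>f\<in>H. norm (f 0) \<le> C * hnorm ip f" using eval_0_bounded by blast
  have "ip f ?c - ?L (f 0) = 0"
  proof (rule bounded_functional_eq_0[where \<phi> = "\<lambda>f. ip f ?c - ?L (f 0)" and K = "hnorm ip ?c + C * K"])
    fix f g assume "f \<in> H" "g \<in> H"
    moreover have "vsub f g 0 = f 0 - g 0" by (simp add: vsub_def)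
    ultimately show "ip (vsub f g) ?c - ?L (vsub f g 0) = ip f ?c - ?L (f 0) - (ip g ?c - ?L (g 0))"
      by (simp add: ip_vsub_left monomial_vec_mem linear_diff[OF bounded_linear.linear[OF L]])
  next
    fix f assume f: "f \<in> H"
    have "norm (ip f ?c - ?L (f 0)) \<le> norm (ip f ?c) + norm (?L (f 0))"
      by (rule norm_triangle_ineq4)
    also have "\<dots> \<le> hnorm ip f * hnorm ip ?c + norm (f 0) * K"
      using K(2)[of "f 0"] Cauchy_Schwarz[OF f monomial_vec_mem] by (rule add_mono[rotated])
    also have "\<dots> \<le> hnorm ip f * hnorm ip ?c + C * hnorm ip f * K"
      using C f K(1) by (simp add: mult_right_mono)
    finally show "norm (ip f ?c - ?L (f 0)) \<le> (hnorm ip ?c + C * K) * hnorm ip f"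
      by (simp add: algebra_simps)
  next
    fix A :: "('d \<Rightarrow> nat) set" and a assume A: "finite A"
    have "ip (poly_vec A a) ?c = (\<Sum>\<alpha>\<in>A. ip (monomial_vec \<alpha> (a \<alpha>)) ?c)"
      using A by (simp add: poly_vec_def ip_sum_left monomial_vec_mem)
    also have "\<dots> = (\<Sum>\<alpha>\<in>A. ?L (monomial_vec \<alpha> (a \<alpha>) 0))"
      by (intro sum.cong refl ip_monomial_vec_constant)
    also have "\<dots> = ?L (poly_vec A a 0)"
      by (simp add: poly_vec_def linear_sum[OF bounded_linear.linear[OF L]])
    finally show "ip (poly_vec A a) ?c - ?L (poly_vec A a 0) = 0" by simp
  qed (rule f)
  then show ?thesis by simp
qed

lemma orthogonal_range_Mz_imp_constant:
  assumes g: "g \<in> H" and orth: "\<And>j h. h \<in> H \<Longrightarrow> ip (Mz j h) g = 0"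
  shows "g = monomial_vec (\<lambda>_. 0) (g 0)"
proof -
  define h where "h = vsub g (monomial_vec (\<lambda>_. 0) (g 0))"
  have h: "h \<in> H" unfolding h_def by (simp add: g vsub_mem monomial_vec_mem)
  have h_perp: "ip (monomial_vec \<alpha> x) h = 0" for \<alpha> x
  proof (cases "\<alpha> = (\<lambda>_. 0)")
    case True
    have "h 0 = 0" by (simp add: h_def vsub_def monomial_vec_at_0)
    then have "ip h (monomial_vec \<alpha> x) = 0"
      using True ip_constant_right[OF h] by (simp add: monomial_vec_zero ip_zero_left monomial_vec_mem)
    then show ?thesis using ip_commute[OF h monomial_vec_mem] by simp
  next
    case False
    then obtain j \<beta> where \<alpha>: "\<alpha> = \<beta>(j := Suc (\<beta> j))" by (rule obtain_fun_upd_Suc)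
    have "ip (monomial_vec \<alpha> x) g = 0"
      using orth[OF monomial_vec_mem, of j \<beta> x] by (simp add: \<alpha> Mz_monomial_vec)
    with False show ?thesis
      by (simp add: h_def ip_vsub_right g monomial_vec_mem monomials_orthogonal)
  qed
  have "ip h h = 0"
  proof (rule bounded_functional_eq_0[where \<phi> = "\<lambda>f. ip f h" and K = "hnorm ip h"])
    fix f assume "f \<in> H"
    then show "norm (ip f h) \<le> hnorm ip h * hnorm ip f"
      using Cauchy_Schwarz[OF _ h] by (simp add: mult.commute)
  next
    fix A :: "('d \<Rightarrow> nat) set" and a assume "finite A"
    then show "ip (poly_vec A a) h = 0"
      by (simp add: poly_vec_def ip_sum_left monomial_vec_mem h h_perp)
  qed (simp_all add: h ip_vsub_left)
  then have "h = (\<lambda>z. 0)" by (rule ip_self_eq_0[OF h])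
  then show ?thesis unfolding h_def vsub_eq_0_iff .
qed

end

section \<open>Unitaries intertwining \<open>M\<close> with \<open>u M\<close>\<close>

definition Mz_comb :: "complex ^ 'd ^ 'd \<Rightarrow> 'd::finite \<Rightarrow> ('d, 'n::finite) vfun \<Rightarrow> ('d, 'n) vfun"
  where "Mz_comb u j f = (\<lambda>z. \<Sum>k\<in>UNIV. u $ j $ k *s Mz k f z)"

definition monomial_vec_comp ::
    "complex ^ 'd ^ 'd \<Rightarrow> ('d::finite \<Rightarrow> nat) \<Rightarrow> complex ^ 'n::finite \<Rightarrow> ('d, 'n) vfun"
  where "monomial_vec_comp u \<alpha> \<xi> = restrB (\<lambda>z. (\<Prod>l\<in>UNIV. ((u *v z) $ l) ^ \<alpha> l) *s \<xi>)"

lemma monomial_vec_comp_zero: "monomial_vec_comp u (\<lambda>_. 0) \<xi> = monomial_vec (\<lambda>_. 0) \<xi>"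
  unfolding monomial_vec_comp_def monomial_vec_def by simp

lemma monomial_vec_comp_fun_upd_Suc:
  "monomial_vec_comp u (\<beta>(j := Suc (\<beta> j))) \<xi> = Mz_comb u j (monomial_vec_comp u \<beta> \<xi>)"
proof -
  have "(u *v z) $ j * p *s \<xi> = (\<Sum>k\<in>UNIV. u $ j $ k *s (z $ k *s (p *s \<xi>)))" for z p
    by (simp add: vec_eq_iff matrix_vector_mult_def sum_component sum_distrib_left algebra_simps)
  then show ?thesis
    unfolding monomial_vec_comp_def Mz_comb_def Mz_def restrB_def
    by (simp add: fun_eq_iff prod_power_fun_upd_Suc mult.assoc del: fun_upd_apply)
qed

lemma Mz_comb_eq_sum: "Mz_comb u j f = (\<lambda>z. \<Sum>k\<in>UNIV. vscale (u $ j $ k) (Mz k f) z)"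
  unfolding Mz_comb_def vscale_def ..

context monomial_rkhs
begin

lemma Mz_comb_mem: "f \<in> H \<Longrightarrow> Mz_comb u j f \<in> H"
  unfolding Mz_comb_eq_sum by (rule sum_mem) (auto intro: vscale_mem Mz_mem)

lemma ip_Mz_comb_left:
  "f \<in> H \<Longrightarrow> g \<in> H \<Longrightarrow> ip (Mz_comb u j f) g = (\<Sum>k\<in>UNIV. u $ j $ k * ip (Mz k f) g)"
  unfolding Mz_comb_eq_sum by (simp add: ip_sum_left vscale_mem Mz_mem ip_vscale_left)

lemma intertwiner_monomial_vec_comp:
  assumes G: "unitary_op H ip G"
    and intertwines: "\<And>j f. f \<in> H \<Longrightarrow> Mz j (G f) = G (Mz_comb u j f)"
  shows "monomial_vec_comp u \<alpha> \<xi> \<in> H \<and>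
    G (monomial_vec_comp u \<alpha> \<xi>) = monomial_vec \<alpha> (G (monomial_vec (\<lambda>_. 0) \<xi>) 0)"
proof (induction \<alpha> rule: multi_index_induct)
  case zero
  have bij: "bij_betw G H H" and G_ip: "\<And>f g. f \<in> H \<Longrightarrow> g \<in> H \<Longrightarrow> ip (G f) (G g) = ip f g"
    using G unfolding unitary_op_def by blast+
  let ?c = "monomial_vec (\<lambda>_. 0) \<xi>"
  have "G ?c = monomial_vec (\<lambda>_. 0) (G ?c 0)"
  proof (rule orthogonal_range_Mz_imp_constant)
    show "G ?c \<in> H" using bij monomial_vec_mem by (metis bij_betwE)
    fix j h assume "h \<in> H"
    then obtain h' where h': "h' \<in> H" "h = G h'" using bij by (metis bij_betw_imp_surj_on imageE)
    then have "ip (Mz j h) (G ?c) = ip (Mz_comb u j h') ?c"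
      by (simp add: intertwines G_ip Mz_comb_mem monomial_vec_mem)
    also have "\<dots> = 0" by (simp add: ip_Mz_comb_left h' monomial_vec_mem ip_Mz_constant)
    finally show "ip (Mz j h) (G ?c) = 0" .
  qed
  then show ?case by (simp add: monomial_vec_comp_zero monomial_vec_mem)
next
  case (Suc \<beta> j)
  then show ?case
    by (simp add: monomial_vec_comp_fun_upd_Suc Mz_comb_mem intertwines[symmetric] Mz_monomial_vec
        del: fun_upd_apply)
qed

lemma ip_monomial_vec_comp_orthogonal:
  assumes "Ud_homogeneous H ip" and "unitary_mat u" and "\<alpha> \<noteq> \<beta>"
  shows "ip (monomial_vec_comp u \<alpha> \<xi>) (monomial_vec_comp u \<beta> \<xi>) = 0"
proof -
  obtain G where G: "unitary_op H ip G"
    and intertwines: "\<And>j f. f \<in> H \<Longrightarrow> Mz j (G f) = G (Mz_comb u j f)"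
    using assms(1,2) unfolding Ud_homogeneous_def Mz_comb_def by blast
  note image = intertwiner_monomial_vec_comp[OF G intertwines]
  have "ip (monomial_vec_comp u \<alpha> \<xi>) (monomial_vec_comp u \<beta> \<xi>)
        = ip (G (monomial_vec_comp u \<alpha> \<xi>)) (G (monomial_vec_comp u \<beta> \<xi>))"
    using G image unfolding unitary_op_def by metis
  also have "\<dots> = 0"
    using image monomials_orthogonal[OF assms(3)] by simp
  finally show ?thesis .
qed

end

section \<open>Rotations in a coordinate plane\<close>

definition rot :: "'d::finite \<Rightarrow> 'd \<Rightarrow> complex \<Rightarrow> complex \<Rightarrow> complex ^ 'd ^ 'd" where
  "rot i j c s = (\<chi> a b.
      if a = i then (if b = i then c else if b = j then s else 0)
      else if a = j then (if b = i then - s else if b = j then c else 0)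
      else if b = a then 1 else 0)"

lemma sum_UNIV_pair:
  fixes f :: "'d::finite \<Rightarrow> 'a::comm_monoid_add"
  assumes "i \<noteq> j"
  shows "(\<Sum>b\<in>UNIV. f b) = f i + f j + (\<Sum>b\<in>UNIV - {i, j}. f b)"
  using assms sum.subset_diff[of "{i, j}" UNIV f] by (simp add: add.commute)

lemma prod_UNIV_pair:
  fixes f :: "'d::finite \<Rightarrow> 'a::comm_monoid_mult"
  assumes "i \<noteq> j"
  shows "(\<Prod>b\<in>UNIV. f b) = f i * f j * (\<Prod>b\<in>UNIV - {i, j}. f b)"
  using assms prod.subset_diff[of "{i, j}" UNIV f] by (simp add: mult.commute)

lemma unitary_mat_rot:
  fixes c s :: real
  assumes ij: "i \<noteq> j" and cs: "c\<^sup>2 + s\<^sup>2 = 1"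
  shows "unitary_mat (rot i j c s)"
  unfolding unitary_mat_def
proof (intro allI)
  fix a k
  let ?u = "rot i j c s"
  have rest: "(\<Sum>b\<in>UNIV - {i, j}. ?u $ a $ b * cnj (?u $ k $ b))
      = (if a = k \<and> a \<noteq> i \<and> a \<noteq> j then 1 else 0)"
  proof -
    have "(\<Sum>b\<in>UNIV - {i, j}. ?u $ a $ b * cnj (?u $ k $ b))
        = (\<Sum>b\<in>UNIV - {i, j}. if b = a then (if a = k \<and> a \<noteq> i \<and> a \<noteq> j then 1 else 0) else 0)"
      by (intro sum.cong refl) (auto simp: rot_def)
    then show ?thesis by (simp add: sum.delta)
  qed
  have "complex_of_real c * c + complex_of_real s * s = 1"
    using cs by (metis of_real_1 of_real_add of_real_mult power2_eq_square)
  then show "(\<Sum>b\<in>UNIV. ?u $ a $ b * cnj (?u $ k $ b)) = (if a = k then 1 else 0)"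
    unfolding sum_UNIV_pair[OF ij] rest using ij by (auto simp: rot_def algebra_simps)
qed

lemma rot_mult_vec_nth:
  assumes ij: "i \<noteq> j"
  shows "(rot i j c s *v z) $ l =
    (if l = i then c * z $ i + s * z $ j else if l = j then - s * z $ i + c * z $ j else z $ l)"
proof -
  have "(\<Sum>k\<in>UNIV - {i, j}. rot i j c s $ l $ k * z $ k)
      = (\<Sum>k\<in>UNIV - {i, j}. if k = l then (if l \<noteq> i \<and> l \<noteq> j then z $ l else 0) else 0)"
    by (intro sum.cong refl) (auto simp: rot_def)
  then show ?thesis
    unfolding matrix_vector_mult_def vec_lambda_beta sum_UNIV_pair[OF ij] using ij
    by (auto simp: rot_def sum.delta)
qed

lemma prod_power_fun_upd_pair:
  fixes w v :: "'d::finite \<Rightarrow> 'a::comm_monoid_mult"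
  assumes ij: "i \<noteq> j" and \<gamma>: "\<gamma> i = 0" "\<gamma> j = 0"
    and wv: "\<And>l. l \<noteq> i \<Longrightarrow> l \<noteq> j \<Longrightarrow> w l = v l"
  shows "(\<Prod>l\<in>UNIV. w l ^ (\<gamma>(i := a, j := b)) l) = w i ^ a * w j ^ b * (\<Prod>l\<in>UNIV. v l ^ \<gamma> l)"
proof -
  have "(\<Prod>l\<in>UNIV - {i, j}. w l ^ (\<gamma>(i := a, j := b)) l) = (\<Prod>l\<in>UNIV - {i, j}. v l ^ \<gamma> l)"
    using wv by (intro prod.cong refl) auto
  then show ?thesis
    unfolding prod_UNIV_pair[OF ij, of "\<lambda>l. w l ^ (\<gamma>(i := a, j := b)) l"]
      prod_UNIV_pair[OF ij, of "\<lambda>l. v l ^ \<gamma> l"]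
    using ij \<gamma> by simp
qed

definition split_index :: "('d \<Rightarrow> nat) \<Rightarrow> 'd \<Rightarrow> 'd \<Rightarrow> nat \<Rightarrow> nat \<Rightarrow> 'd \<Rightarrow> nat"
  where "split_index \<gamma> i j N k = \<gamma>(i := k, j := N - k)"

lemma split_index_inj:
  "i \<noteq> j \<Longrightarrow> split_index \<gamma> i j N k = split_index \<gamma> i j N m \<Longrightarrow> k = m"
  unfolding split_index_def by (metis fun_upd_other fun_upd_same)

lemma sum_monomial_vec_eq_restrB:
  "(\<lambda>z. \<Sum>k\<in>K. monomial_vec (\<beta> k) (a k *s \<xi>) z) =
   restrB (\<lambda>z. (\<Sum>k\<in>K. a k * (\<Prod>l\<in>UNIV. z $ l ^ \<beta> k l)) *s \<xi>)"
  unfolding monomial_vec_def restrB_def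
  by (simp add: fun_eq_iff vec_eq_iff sum_component sum_distrib_left sum_distrib_right algebra_simps)

lemma vadd_restrB: "vadd (restrB f) (restrB g) = restrB (\<lambda>z. f z + g z)"
  unfolding vadd_def restrB_def by (simp add: fun_eq_iff)

lemma restrB_cong: "(\<And>z. z \<in> ballB \<Longrightarrow> f z = g z) \<Longrightarrow> restrB f = restrB g"
  unfolding restrB_def by (simp add: fun_eq_iff)

context
  fixes i j :: "'d::finite" and \<gamma> :: "'d \<Rightarrow> nat"
  assumes ij: "i \<noteq> j" and \<gamma>: "\<gamma> i = 0" "\<gamma> j = 0"
begin

lemma prod_power_split_index:
  "(\<Prod>l\<in>UNIV. z $ l ^ split_index \<gamma> i j N k l) = z $ i ^ k * z $ j ^ (N - k) * (\<Prod>l\<in>UNIV. z $ l ^ \<gamma> l)"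
  unfolding split_index_def by (rule prod_power_fun_upd_pair[OF ij \<gamma>]) simp

lemma monomial_vec_comp_rot:
  "monomial_vec_comp (rot i j c s) (\<gamma>(i := a, j := b)) \<xi> = restrB (\<lambda>z.
     ((c * z $ i + s * z $ j) ^ a * (- s * z $ i + c * z $ j) ^ b * (\<Prod>l\<in>UNIV. z $ l ^ \<gamma> l)) *s \<xi>)"
  unfolding monomial_vec_comp_def
proof (rule restrB_cong)
  fix z :: "complex ^ 'd"
  have "(\<Prod>l\<in>UNIV. (rot i j c s *v z) $ l ^ (\<gamma>(i := a, j := b)) l)
      = (rot i j c s *v z) $ i ^ a * (rot i j c s *v z) $ j ^ b * (\<Prod>l\<in>UNIV. z $ l ^ \<gamma> l)"
    by (rule prod_power_fun_upd_pair[OF ij \<gamma>]) (simp add: rot_mult_vec_nth[OF ij])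
  then show "(\<Prod>l\<in>UNIV. (rot i j c s *v z) $ l ^ (\<gamma>(i := a, j := b)) l) *s \<xi> =
      ((c * z $ i + s * z $ j) ^ a * (- s * z $ i + c * z $ j) ^ b * (\<Prod>l\<in>UNIV. z $ l ^ \<gamma> l)) *s \<xi>"
    using ij by (simp add: rot_mult_vec_nth)
qed

lemma monomial_vec_comp_rot_pure:
  "monomial_vec_comp (rot i j c s) (\<gamma>(i := N, j := 0)) \<xi> = (\<lambda>z. \<Sum>k\<le>N.
     monomial_vec (split_index \<gamma> i j N k) ((of_nat (N choose k) * c ^ k * s ^ (N - k)) *s \<xi>) z)"
  unfolding sum_monomial_vec_eq_restrB monomial_vec_comp_rot prod_power_split_index
proof (rule restrB_cong)
  fix z :: "complex ^ 'd"
  show "((c * z $ i + s * z $ j) ^ N * (- s * z $ i + c * z $ j) ^ 0 * (\<Prod>l\<in>UNIV. z $ l ^ \<gamma> l)) *s \<xi> =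
    (\<Sum>k\<le>N. of_nat (N choose k) * c ^ k * s ^ (N - k) *
       (z $ i ^ k * z $ j ^ (N - k) * (\<Prod>l\<in>UNIV. z $ l ^ \<gamma> l))) *s \<xi>"
    by (simp add: binomial_ring sum_distrib_left sum_distrib_right power_mult_distrib algebra_simps)
qed

lemma monomial_vec_comp_rot_mixed:
  "monomial_vec_comp (rot i j c s) (\<gamma>(i := M, j := 1)) \<xi> = vadd
     (\<lambda>z. \<Sum>m\<le>M. monomial_vec (split_index \<gamma> i j (Suc M) (Suc m))
        ((- s * of_nat (M choose m) * c ^ m * s ^ (M - m)) *s \<xi>) z)
     (\<lambda>z. \<Sum>m\<le>M. monomial_vec (split_index \<gamma> i j (Suc M) m)
        ((of_nat (M choose m) * c ^ Suc m * s ^ (M - m)) *s \<xi>) z)"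
  unfolding sum_monomial_vec_eq_restrB monomial_vec_comp_rot prod_power_split_index vadd_restrB
proof (rule restrB_cong)
  fix z :: "complex ^ 'd"
  let ?P = "\<Prod>l\<in>UNIV. z $ l ^ \<gamma> l"
  have "(c * z $ i + s * z $ j) ^ M * (- s * z $ i + c * z $ j)
      = (\<Sum>m\<le>M. of_nat (M choose m) * (c * z $ i) ^ m * (s * z $ j) ^ (M - m) * (- s * z $ i + c * z $ j))"
    by (simp add: binomial_ring sum_distrib_right)
  also have "\<dots> = (\<Sum>m\<le>M. - s * of_nat (M choose m) * c ^ m * s ^ (M - m) * (z $ i ^ Suc m * z $ j ^ (Suc M - Suc m))
      + of_nat (M choose m) * c ^ Suc m * s ^ (M - m) * (z $ i ^ m * z $ j ^ (Suc M - m)))"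
  proof (intro sum.cong refl)
    fix m assume "m \<in> {..M}"
    then have "Suc M - m = Suc (M - m)" by auto
    then show "of_nat (M choose m) * (c * z $ i) ^ m * (s * z $ j) ^ (M - m) * (- s * z $ i + c * z $ j)
      = - s * of_nat (M choose m) * c ^ m * s ^ (M - m) * (z $ i ^ Suc m * z $ j ^ (Suc M - Suc m))
        + of_nat (M choose m) * c ^ Suc m * s ^ (M - m) * (z $ i ^ m * z $ j ^ (Suc M - m))"
      by (simp add: power_mult_distrib algebra_simps)
  qed
  finally have "(c * z $ i + s * z $ j) ^ M * (- s * z $ i + c * z $ j) ^ 1 * ?P =
    (\<Sum>m\<le>M. - s * of_nat (M choose m) * c ^ m * s ^ (M - m) * (z $ i ^ Suc m * z $ j ^ (Suc M - Suc m) * ?P))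
    + (\<Sum>m\<le>M. of_nat (M choose m) * c ^ Suc m * s ^ (M - m) * (z $ i ^ m * z $ j ^ (Suc M - m) * ?P))"
    by (simp only: power_one_right sum.distrib[symmetric] sum_distrib_right distrib_right mult.assoc)
  then show "((c * z $ i + s * z $ j) ^ M * (- s * z $ i + c * z $ j) ^ 1 * ?P) *s \<xi> =
    (\<Sum>m\<le>M. - s * of_nat (M choose m) * c ^ m * s ^ (M - m) * (z $ i ^ Suc m * z $ j ^ (Suc M - Suc m) * ?P)) *s \<xi>
    + (\<Sum>m\<le>M. of_nat (M choose m) * c ^ Suc m * s ^ (M - m) * (z $ i ^ m * z $ j ^ (Suc M - m) * ?P)) *s \<xi>"
    by (simp only: vector_sadd_rdistrib)
qed

end

lemma obtain_unit_circle_point: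
  fixes y :: real
  assumes "y > 0"
  obtains c s \<kappa> :: real where "c\<^sup>2 + s\<^sup>2 = 1" and "\<kappa> \<noteq> 0"
    and "\<And>m. m \<le> M \<Longrightarrow> c ^ (2 * m + 1) * s ^ (2 * (M - m) + 1) = \<kappa> * y ^ m"
proof
  define t where "t = sqrt y"
  define s where "s = 1 / sqrt (1 + y)"
  have t: "t > 0" "t\<^sup>2 = y" using \<open>y > 0\<close> by (simp_all add: t_def)
  have s: "s > 0" "s\<^sup>2 = 1 / (1 + y)" using \<open>y > 0\<close> by (simp_all add: s_def power_divide)
  show "(t * s)\<^sup>2 + s\<^sup>2 = 1"
    using \<open>y > 0\<close> unfolding power_mult_distrib t s by (simp add: field_simps)
  show "t * s ^ (2 * M + 2) \<noteq> 0" using t s by simp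
  fix m assume "m \<le> M"
  then have "2 * m + 1 + (2 * (M - m) + 1) = 2 * M + 2" by simp
  then have e: "s ^ (2 * m + 1) * s ^ (2 * (M - m) + 1) = s ^ (2 * M + 2)"
    by (simp only: power_add[symmetric])
  have "(t * s) ^ (2 * m + 1) * s ^ (2 * (M - m) + 1)
      = t * (t\<^sup>2) ^ m * (s ^ (2 * m + 1) * s ^ (2 * (M - m) + 1))"
    by (simp add: power_mult_distrib power_mult[symmetric] mult_2 algebra_simps)
  also have "\<dots> = t * s ^ (2 * M + 2) * y ^ m"
    unfolding e t(2) by (simp only: mult_ac)
  finally show "(t * s) ^ (2 * m + 1) * s ^ (2 * (M - m) + 1) = t * s ^ (2 * M + 2) * y ^ m" .
qed

lemma polyfun_eq_0_on_positive_reals: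
  fixes q :: "nat \<Rightarrow> complex"
  assumes vanish: "\<And>y. y > 0 \<Longrightarrow> (\<Sum>m\<le>M. q m * of_real y ^ m) = 0" and "m \<le> M"
  shows "q m = 0"
proof (rule ccontr)
  assume "q m \<noteq> 0"
  then have "finite {x. (\<Sum>k\<le>M. q k * x ^ k) = 0}"
    using polyfun_finite_roots \<open>m \<le> M\<close> by blast
  moreover have "of_real ` {0 :: real<..} \<subseteq> {x. (\<Sum>k\<le>M. q k * x ^ k) = 0}"
    using vanish by auto
  moreover have "infinite (of_real ` {0 :: real<..} :: complex set)"
    using infinite_Ioi finite_imageD inj_of_real inj_on_subset by blast
  ultimately show False using finite_subset by blast
qed

context monomial_rkhs
begin

abbreviation sqnorm_mon :: "('d \<Rightarrow> nat) \<Rightarrow> complex ^ 'n \<Rightarrow> complex"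
  where "sqnorm_mon \<alpha> \<xi> \<equiv> ip (monomial_vec \<alpha> \<xi>) (monomial_vec \<alpha> \<xi>)"

lemma ip_sum_split_index:
  assumes ij: "i \<noteq> j" and K: "finite K" and L: "finite L" and f: "f ` L \<subseteq> K"
  shows "ip (\<lambda>z. \<Sum>k\<in>K. monomial_vec (split_index \<gamma> i j N k) (a k *s \<xi>) z)
            (\<lambda>z. \<Sum>l\<in>L. monomial_vec (split_index \<gamma> i j N (f l)) (b l *s \<xi>) z)
       = (\<Sum>l\<in>L. a (f l) * cnj (b l) * sqnorm_mon (split_index \<gamma> i j N (f l)) \<xi>)"
proof -
  let ?S = "\<lambda>z. \<Sum>k\<in>K. monomial_vec (split_index \<gamma> i j N k) (a k *s \<xi>) z"
  have S: "?S \<in> H" using K by (intro sum_mem monomial_vec_mem)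
  have "ip (monomial_vec (split_index \<gamma> i j N k) (a k *s \<xi>)) (monomial_vec (split_index \<gamma> i j N m) (y *s \<xi>))
      = (if k = m then a m * cnj y * sqnorm_mon (split_index \<gamma> i j N m) \<xi> else 0)" for k m y
  proof (cases "k = m")
    case False
    then have "split_index \<gamma> i j N k \<noteq> split_index \<gamma> i j N m" using split_index_inj[OF ij] by blast
    with False show ?thesis by (simp add: monomials_orthogonal)
  qed (simp add: monomial_vec_scale ip_vscale_left ip_vscale_right monomial_vec_mem vscale_mem)
  then have "ip ?S (monomial_vec (split_index \<gamma> i j N m) (y *s \<xi>))
      = a m * cnj y * sqnorm_mon (split_index \<gamma> i j N m) \<xi>" if "m \<in> K" for m y
    using K that by (simp add: ip_sum_left monomial_vec_mem sum.delta' cong: sum.cong)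
  with f show ?thesis
    by (simp add: ip_sum_right[OF L monomial_vec_mem S] image_subset_iff cong: sum.cong)
qed

lemma ip_rot_monomials:
  fixes c s :: real and M :: nat and \<xi> :: "complex ^ 'n"
  assumes ij: "i \<noteq> j" and \<gamma>: "\<gamma> i = 0" "\<gamma> j = 0"
  defines "w \<equiv> \<lambda>k. sqnorm_mon (split_index \<gamma> i j (Suc M) k) \<xi>"
  shows "ip (monomial_vec_comp (rot i j c s) (\<gamma>(i := Suc M, j := 0)) \<xi>)
            (monomial_vec_comp (rot i j c s) (\<gamma>(i := M, j := 1)) \<xi>)
       = (\<Sum>m\<le>M. of_nat (M choose m) * of_real (c ^ (2 * m + 1) * s ^ (2 * (M - m) + 1)) *
            (of_nat (Suc M choose m) * w m - of_nat (Suc M choose Suc m) * w (Suc m)))"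
proof -
  let ?a = "\<lambda>k. of_nat (Suc M choose k) * of_real c ^ k * of_real s ^ (Suc M - k)"
  let ?b1 = "\<lambda>m. - of_real s * of_nat (M choose m) * of_real c ^ m * of_real s ^ (M - m)"
  let ?b2 = "\<lambda>m. of_nat (M choose m) * of_real c ^ Suc m * of_real s ^ (M - m)"
  let ?A = "\<lambda>z. \<Sum>k\<le>Suc M. monomial_vec (split_index \<gamma> i j (Suc M) k) (?a k *s \<xi>) z"
  let ?S1 = "\<lambda>z. \<Sum>m\<le>M. monomial_vec (split_index \<gamma> i j (Suc M) (Suc m)) (?b1 m *s \<xi>) z"
  let ?S2 = "\<lambda>z. \<Sum>m\<le>M. monomial_vec (split_index \<gamma> i j (Suc M) m) (?b2 m *s \<xi>) z"
  have "ip (monomial_vec_comp (rot i j c s) (\<gamma>(i := Suc M, j := 0)) \<xi>)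
           (monomial_vec_comp (rot i j c s) (\<gamma>(i := M, j := 1)) \<xi>) = ip ?A (vadd ?S1 ?S2)"
    by (simp only: monomial_vec_comp_rot_pure[OF ij \<gamma>] monomial_vec_comp_rot_mixed[OF ij \<gamma>])
  also have "\<dots> = ip ?A ?S1 + ip ?A ?S2"
    by (intro ip_vadd_right sum_mem monomial_vec_mem finite_atMost)
  also have "ip ?A ?S1 = (\<Sum>m\<le>M. ?a (Suc m) * cnj (?b1 m) * w (Suc m))"
    unfolding w_def by (rule ip_sum_split_index[OF ij finite_atMost finite_atMost]) auto
  also have "ip ?A ?S2 = (\<Sum>m\<le>M. ?a m * cnj (?b2 m) * w m)"
    unfolding w_def by (rule ip_sum_split_index[OF ij finite_atMost finite_atMost]) auto
  also have "(\<Sum>m\<le>M. ?a (Suc m) * cnj (?b1 m) * w (Suc m)) + (\<Sum>m\<le>M. ?a m * cnj (?b2 m) * w m)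
      = (\<Sum>m\<le>M. of_nat (M choose m) * of_real (c ^ (2 * m + 1) * s ^ (2 * (M - m) + 1)) *
            (of_nat (Suc M choose m) * w m - of_nat (Suc M choose Suc m) * w (Suc m)))"
    unfolding sum.distrib[symmetric]
  proof (intro sum.cong refl)
    fix m assume "m \<in> {..M}"
    then have e: "Suc M - m = Suc (M - m)" by auto
    have p: "(of_real c :: complex) ^ (2 * m + 1) = of_real c ^ Suc m * of_real c ^ m"
      "(of_real s :: complex) ^ (2 * (M - m) + 1) = of_real s ^ Suc (M - m) * of_real s ^ (M - m)"
      by (simp_all add: power_add[symmetric] mult_2)
    show "?a (Suc m) * cnj (?b1 m) * w (Suc m) + ?a m * cnj (?b2 m) * w m
        = of_nat (M choose m) * of_real (c ^ (2 * m + 1) * s ^ (2 * (M - m) + 1)) *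
            (of_nat (Suc M choose m) * w m - of_nat (Suc M choose Suc m) * w (Suc m))"
      unfolding of_real_mult of_real_power p e by (simp add: algebra_simps del: binomial_Suc_Suc)
  qed
  finally show ?thesis .
qed

lemma binomial_relation:
  assumes Ud: "Ud_homogeneous H ip" and ij: "i \<noteq> j" and \<gamma>: "\<gamma> i = 0" "\<gamma> j = 0" and "m \<le> M"
  shows "of_nat (Suc M choose m) * sqnorm_mon (split_index \<gamma> i j (Suc M) m) \<xi>
       = of_nat (Suc M choose Suc m) * sqnorm_mon (split_index \<gamma> i j (Suc M) (Suc m)) \<xi>"
proof -
  define w where "w k = sqnorm_mon (split_index \<gamma> i j (Suc M) k) \<xi>" for k
  define q where "q m = of_nat (M choose m) *
    (of_nat (Suc M choose m) * w m - of_nat (Suc M choose Suc m) * w (Suc m))" for m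
  have "(\<Sum>m\<le>M. q m * of_real y ^ m) = 0" if "y > 0" for y
  proof -
    obtain c s \<kappa> :: real where cs: "c\<^sup>2 + s\<^sup>2 = 1" and "\<kappa> \<noteq> 0"
      and power: "\<And>m. m \<le> M \<Longrightarrow> c ^ (2 * m + 1) * s ^ (2 * (M - m) + 1) = \<kappa> * y ^ m"
      using obtain_unit_circle_point[OF \<open>y > 0\<close>] by blast
    have "\<gamma>(i := Suc M, j := 0) \<noteq> \<gamma>(i := M, j := 1)" by (metis fun_upd_same zero_neq_one)
    then have "0 = ip (monomial_vec_comp (rot i j c s) (\<gamma>(i := Suc M, j := 0)) \<xi>)
                      (monomial_vec_comp (rot i j c s) (\<gamma>(i := M, j := 1)) \<xi>)"
      by (rule ip_monomial_vec_comp_orthogonal[OF Ud unitary_mat_rot[OF ij cs], symmetric])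
    also have "\<dots> = (\<Sum>m\<le>M. of_nat (M choose m) * of_real (c ^ (2 * m + 1) * s ^ (2 * (M - m) + 1)) *
            (of_nat (Suc M choose m) * w m - of_nat (Suc M choose Suc m) * w (Suc m)))"
      unfolding w_def by (rule ip_rot_monomials[OF ij \<gamma>])
    also have "\<dots> = of_real \<kappa> * (\<Sum>m\<le>M. q m * of_real y ^ m)"
      unfolding sum_distrib_left
    proof (intro sum.cong refl)
      fix m assume "m \<in> {..M}"
      then have "of_real (c ^ (2 * m + 1) * s ^ (2 * (M - m) + 1)) = of_real \<kappa> * (of_real y ^ m :: complex)"
        by (simp only: power of_real_mult of_real_power atMost_iff)
      then show "of_nat (M choose m) * of_real (c ^ (2 * m + 1) * s ^ (2 * (M - m) + 1)) *
          (of_nat (Suc M choose m) * w m - of_nat (Suc M choose Suc m) * w (Suc m))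
        = of_real \<kappa> * (q m * of_real y ^ m)"
        unfolding q_def by (simp only: mult_ac)
    qed
    finally show ?thesis using \<open>\<kappa> \<noteq> 0\<close> by simp
  qed
  then have "q m = 0" using polyfun_eq_0_on_positive_reals \<open>m \<le> M\<close> by blast
  with \<open>m \<le> M\<close> show ?thesis by (simp add: q_def w_def)
qed

section \<open>The quotients \<open>\<parallel>z\<^sup>\<alpha> \<xi>\<parallel>\<^sup>2 / \<alpha>!\<close>\<close>

lemma sqnorm_mon_shift:
  assumes Ud: "Ud_homogeneous H ip" and ij: "i \<noteq> j"
  shows "of_nat (Suc (\<beta> j)) * sqnorm_mon (\<beta>(i := Suc (\<beta> i))) \<xi>
       = of_nat (Suc (\<beta> i)) * sqnorm_mon (\<beta>(j := Suc (\<beta> j))) \<xi>"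
proof -
  let ?a = "\<beta> i" and ?b = "\<beta> j"
  let ?X = "sqnorm_mon (\<beta>(j := Suc ?b)) \<xi>" and ?Y = "sqnorm_mon (\<beta>(i := Suc ?a)) \<xi>"
  let ?C = "of_nat (Suc (?a + ?b) choose ?a) :: complex"
  let ?D = "of_nat (Suc (?a + ?b) choose Suc ?a) :: complex"
  define \<gamma> where "\<gamma> = \<beta>(i := 0, j := 0)"
  have \<gamma>: "\<gamma> i = 0" "\<gamma> j = 0" by (simp_all add: \<gamma>_def)
  have "split_index \<gamma> i j (Suc (?a + ?b)) ?a = \<beta>(j := Suc ?b)"
    "split_index \<gamma> i j (Suc (?a + ?b)) (Suc ?a) = \<beta>(i := Suc ?a)"
    using ij by (auto simp: split_index_def \<gamma>_def fun_eq_iff)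
  with binomial_relation[OF Ud ij \<gamma> le_add1[of ?a ?b], where \<xi> = \<xi>]
  have rel: "?C * ?X = ?D * ?Y" by (simp only:)
  have binom: "of_nat (Suc ?a) * ?D = of_nat (Suc ?b) * ?C"
    by (simp only: of_nat_mult[symmetric] Suc_times_binomial_add)
  have "?C * (of_nat (Suc ?a) * ?X) = of_nat (Suc ?a) * (?C * ?X)"
    by (simp only: mult.left_commute)
  also have "\<dots> = of_nat (Suc ?a) * ?D * ?Y" by (simp only: rel mult.assoc)
  also have "\<dots> = of_nat (Suc ?b) * ?C * ?Y" by (simp only: binom)
  also have "\<dots> = ?C * (of_nat (Suc ?b) * ?Y)" by (simp only: mult_ac)
  finally have "?C * (of_nat (Suc ?a) * ?X) = ?C * (of_nat (Suc ?b) * ?Y)" .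
  moreover have "?C \<noteq> 0" by simp
  ultimately show ?thesis by simp
qed

definition normalized_sqnorm :: "('d \<Rightarrow> nat) \<Rightarrow> complex ^ 'n \<Rightarrow> complex"
  where "normalized_sqnorm \<alpha> \<xi> = sqnorm_mon \<alpha> \<xi> / of_nat (mi_fact \<alpha>)"

lemma normalized_sqnorm_shift:
  assumes "Ud_homogeneous H ip" and "i \<noteq> j"
  shows "normalized_sqnorm (\<beta>(i := Suc (\<beta> i))) \<xi> = normalized_sqnorm (\<beta>(j := Suc (\<beta> j))) \<xi>"
proof -
  let ?X = "sqnorm_mon (\<beta>(j := Suc (\<beta> j))) \<xi>" and ?Y = "sqnorm_mon (\<beta>(i := Suc (\<beta> i))) \<xi>"
  let ?F = "of_nat (mi_fact \<beta>) :: complex"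
  have F: "?F \<noteq> 0" using mi_fact_pos by simp
  have "?Y * (of_nat (Suc (\<beta> j)) * ?F) = (of_nat (Suc (\<beta> j)) * ?Y) * ?F" by (simp only: mult_ac)
  also have "\<dots> = (of_nat (Suc (\<beta> i)) * ?X) * ?F" by (simp only: sqnorm_mon_shift[OF assms])
  also have "\<dots> = ?X * (of_nat (Suc (\<beta> i)) * ?F)" by (simp only: mult_ac)
  finally have eq: "?Y * (of_nat (Suc (\<beta> j)) * ?F) = ?X * (of_nat (Suc (\<beta> i)) * ?F)" .
  have nz: "of_nat (Suc (\<beta> i)) * ?F \<noteq> 0" "of_nat (Suc (\<beta> j)) * ?F \<noteq> 0"
    using F by (simp_all del: of_nat_Suc)
  show ?thesis
    unfolding normalized_sqnorm_def mi_fact_fun_upd_Suc of_nat_mult frac_eq_eq[OF nz] by (rule eq)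
qed

lemma normalized_sqnorm_concentrate:
  assumes Ud: "Ud_homogeneous H ip"
  shows "normalized_sqnorm \<beta> \<xi> = normalized_sqnorm (\<lambda>l. if l = i0 then mi_abs \<beta> else 0) \<xi>"
proof -
  \<comment> \<open>generalised so that the induction can push each unit of \<open>\<beta>\<close> into the coordinate \<open>i0\<close>\<close>
  have "\<forall>n. normalized_sqnorm (\<beta>(i0 := \<beta> i0 + n)) \<xi>
          = normalized_sqnorm (\<lambda>l. if l = i0 then mi_abs \<beta> + n else 0) \<xi>"
  proof (induction \<beta> rule: multi_index_induct)
    case zero
    have "mi_abs ((\<lambda>_. 0) :: 'd \<Rightarrow> nat) = 0" by (simp add: mi_abs_def)
    then show ?case by (simp add: fun_upd_def cong: if_cong)
  next
    case (Suc \<beta> j)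
    show ?case
    proof
      fix n
      let ?\<delta> = "\<beta>(i0 := \<beta> i0 + n)"
      have "normalized_sqnorm ((\<beta>(j := Suc (\<beta> j)))(i0 := (\<beta>(j := Suc (\<beta> j))) i0 + n)) \<xi>
          = normalized_sqnorm (\<beta>(i0 := \<beta> i0 + Suc n)) \<xi>"
      proof (cases "j = i0")
        case False
        then have "(\<beta>(j := Suc (\<beta> j)))(i0 := (\<beta>(j := Suc (\<beta> j))) i0 + n) = ?\<delta>(j := Suc (?\<delta> j))"
          "\<beta>(i0 := \<beta> i0 + Suc n) = ?\<delta>(i0 := Suc (?\<delta> i0))"
          by (auto simp: fun_eq_iff)
        with normalized_sqnorm_shift[OF Ud False[symmetric], of ?\<delta> \<xi>] show ?thesis by simp
      qed simp
      also have "\<dots> = normalized_sqnorm (\<lambda>l. if l = i0 then mi_abs (\<beta>(j := Suc (\<beta> j))) + n else 0) \<xi>"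
        unfolding mi_abs_fun_upd_Suc using Suc.IH[rule_format, of "Suc n"]
        by (simp add: fun_upd_def cong: if_cong)
      finally show "normalized_sqnorm ((\<beta>(j := Suc (\<beta> j)))(i0 := (\<beta>(j := Suc (\<beta> j))) i0 + n)) \<xi>
          = normalized_sqnorm (\<lambda>l. if l = i0 then mi_abs (\<beta>(j := Suc (\<beta> j))) + n else 0) \<xi>" .
    qed
  qed
  from this[rule_format, of 0] show ?thesis by (simp cong: if_cong)
qed

lemma sqnorm_mon_expansion:
  "sqnorm_mon \<beta> \<xi> = (\<Sum>b\<in>UNIV. \<Sum>a\<in>UNIV.
     \<xi> $ b * cnj (\<xi> $ a) * ip (monomial_vec \<beta> (axis b 1)) (monomial_vec \<beta> (axis a 1)))"
proof -
  let ?e = "\<lambda>a. monomial_vec \<beta> (axis a 1)"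
  let ?S = "\<lambda>z. \<Sum>a\<in>UNIV. vscale (\<xi> $ a) (?e a) z"
  have e: "vscale c (?e a) \<in> H" for c a by (intro vscale_mem monomial_vec_mem)
  have S: "?S \<in> H" by (rule sum_mem) (auto intro: e)
  have "sqnorm_mon \<beta> \<xi> = ip ?S ?S"
    by (subst (1 2) monomial_vec_axis_expansion) (rule refl)
  also have "\<dots> = (\<Sum>b\<in>UNIV. ip (vscale (\<xi> $ b) (?e b)) ?S)"
    by (rule ip_sum_left[OF _ _ S]) (auto intro: e)
  also have "\<dots> = (\<Sum>b\<in>UNIV. \<xi> $ b * (\<Sum>a\<in>UNIV. ip (?e b) (vscale (\<xi> $ a) (?e a))))"
    by (intro sum.cong refl) (simp add: ip_vscale_left monomial_vec_mem S ip_sum_right e sum_distrib_left)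
  also have "\<dots> = (\<Sum>b\<in>UNIV. \<Sum>a\<in>UNIV. \<xi> $ b * cnj (\<xi> $ a) * ip (?e b) (?e a))"
    by (intro sum.cong refl) (simp add: ip_vscale_right monomial_vec_mem sum_distrib_left algebra_simps)
  finally show ?thesis .
qed

lemma cinner_Gram_matrix:
  "cinner ((\<chi> a b. ip (monomial_vec \<beta> (axis b 1)) (monomial_vec \<beta> (axis a 1)) / r) *v \<xi>) \<xi>
   = sqnorm_mon \<beta> \<xi> / r"
proof -
  let ?G = "\<lambda>a b. ip (monomial_vec \<beta> (axis b 1)) (monomial_vec \<beta> (axis a 1))"
  have "cinner ((\<chi> a b. ?G a b / r) *v \<xi>) \<xi> = (\<Sum>a\<in>UNIV. \<Sum>b\<in>UNIV. \<xi> $ b * cnj (\<xi> $ a) * ?G a b / r)"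
    unfolding cinner_def matrix_vector_mult_def
    by (simp add: sum_distrib_right) (simp add: algebra_simps)
  also have "\<dots> = (\<Sum>b\<in>UNIV. \<Sum>a\<in>UNIV. \<xi> $ b * cnj (\<xi> $ a) * ?G a b / r)"
    by (rule sum.swap)
  also have "\<dots> = sqnorm_mon \<beta> \<xi> / r"
    unfolding sqnorm_mon_expansion by (simp add: sum_divide_distrib)
  finally show ?thesis .
qed

lemma posdef_mat_Gram_matrix:
  assumes "r > 0"
  shows "posdef_mat (\<chi> a b. ip (monomial_vec \<beta> (axis b 1)) (monomial_vec \<beta> (axis a 1)) / of_real r)"
  unfolding posdef_mat_def cinner_Gram_matrix
proof (intro conjI allI impI)
  fix a b
  have "ip (monomial_vec \<beta> (axis b 1)) (monomial_vec \<beta> (axis a 1))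
      = cnj (ip (monomial_vec \<beta> (axis a 1)) (monomial_vec \<beta> (axis b 1)))"
    by (rule ip_commute[OF monomial_vec_mem monomial_vec_mem])
  then show "(\<chi> a b. ip (monomial_vec \<beta> (axis b 1)) (monomial_vec \<beta> (axis a 1)) / of_real r) $ a $ b =
        cnj ((\<chi> a b. ip (monomial_vec \<beta> (axis b 1)) (monomial_vec \<beta> (axis a 1)) / of_real r) $ b $ a)"
    by simp
next
  fix \<xi> :: "complex ^ 'n" assume "\<xi> \<noteq> 0"
  then have "monomial_vec \<beta> \<xi> \<noteq> (\<lambda>z. 0)" by (rule monomial_vec_nonzero)
  then have "sqnorm_mon \<beta> \<xi> \<noteq> 0" using ip_self_eq_0[OF monomial_vec_mem] by blast
  moreover have Im: "Im (sqnorm_mon \<beta> \<xi>) = 0" by (rule ip_self_Im[OF monomial_vec_mem])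
  ultimately have "Re (sqnorm_mon \<beta> \<xi>) \<noteq> 0" by (simp add: complex_eq_iff)
  then have "Re (sqnorm_mon \<beta> \<xi>) > 0"
    using ip_self_Re_nonneg[OF monomial_vec_mem, of \<beta> \<xi>] by simp
  with \<open>r > 0\<close> Im show "Im (sqnorm_mon \<beta> \<xi> / of_real r) = 0" "Re (sqnorm_mon \<beta> \<xi> / of_real r) > 0"
    by (simp_all add: Re_divide_of_real Im_divide_of_real)
qed

end

theorem theorem4p10:
  fixes H :: "(complex ^ 'd::finite \<Rightarrow> complex ^ 'n::finite) set"
    and ip :: "(complex ^ 'd \<Rightarrow> complex ^ 'n) \<Rightarrow> (complex ^ 'd \<Rightarrow> complex ^ 'n) \<Rightarrow> complex"
  assumes "rkhs_hol H ip"
    and "polys_dense H ip"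
    and "\<And>\<alpha> \<beta> \<xi> \<eta>. \<alpha> \<noteq> \<beta> \<Longrightarrow> ip (monomial_vec \<alpha> \<xi>) (monomial_vec \<beta> \<eta>) = 0"
    and "mult_bounded H ip"
    and "Ud_homogeneous H ip"
  shows "\<exists>A :: nat \<Rightarrow> complex ^ 'n ^ 'n. (\<forall>l. posdef_mat (A l)) \<and>
           (\<forall>\<alpha> \<xi>. ip (monomial_vec \<alpha> \<xi>) (monomial_vec \<alpha> \<xi>)
                 = of_nat (mi_fact \<alpha>) * cinner (A (mi_abs \<alpha>) *v \<xi>) \<xi>)"
proof -
  interpret monomial_rkhs H ip
    using assms(1-4) by unfold_locales (simp_all add: rkhs_hol_def)
  define e :: "nat \<Rightarrow> 'd \<Rightarrow> nat" where "e l = (\<lambda>i. if i = undefined then l else 0)" for l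
  define A where "A l = (\<chi> a b. ip (monomial_vec (e l) (axis b 1)) (monomial_vec (e l) (axis a 1))
    / of_real (fact l))" for l
  have A: "cinner (A l *v \<xi>) \<xi> = normalized_sqnorm (e l) \<xi>" for l \<xi>
  proof -
    have "mi_fact (e l) = fact l"
      unfolding mi_fact_def e_def by (subst prod.remove[of UNIV undefined]) (auto intro: prod.neutral)
    then show ?thesis unfolding A_def cinner_Gram_matrix normalized_sqnorm_def by simp
  qed
  have "ip (monomial_vec \<alpha> \<xi>) (monomial_vec \<alpha> \<xi>) = of_nat (mi_fact \<alpha>) * normalized_sqnorm \<alpha> \<xi>"
    for \<alpha> \<xi>
    using mi_fact_pos[of \<alpha>] by (simp add: normalized_sqnorm_def)
  also have "normalized_sqnorm \<alpha> \<xi> = cinner (A (mi_abs \<alpha>) *v \<xi>) \<xi>" for \<alpha> \<xi>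
    unfolding A e_def by (rule normalized_sqnorm_concentrate[OF assms(5)])
  moreover have "posdef_mat (A l)" for l
    unfolding A_def by (rule posdef_mat_Gram_matrix) simp
  ultimately show ?thesis by auto
qed

end
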